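(* Let $n\ge2$ and let $A=(a_{ij})$ be an $n\times n$ nonnegative irreducible matrix with all diagonal entries $0$ and row sums $r_1\ge r_2\ge\cdots\ge r_n$. Let $N=\max_{i\ne j}a_{ij}$ and assume $N>0$. Then for $1\le i\le n$, \[\rho(A)\le \frac{r_i-N+\sqrt{(r_i+N)^2+4N\sum_{k=1}^{i-1}(r_k-r_i)}}{2}.\] Equality holds if and only if $r_1=\cdots=r_n$, or for some $2\le t\le i$: (i) $a_{kl}=N$ for all $1\le k\le n$, $1\le l\le t-1$, $k\ne l$; (ii) $r_t=\cdots=r_n$.
   Context: $\rho(A)$ denotes the spectral radius of $A$. An empty sum equals $0$. *)

theory Defs
  imports "Jordan_Normal_Form.Spectral_Radius"
begin

definition nonneg_mat :: "real mat \<Rightarrow> bool" where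
  "nonneg_mat A \<longleftrightarrow> (\<forall>i<dim_row A. \<forall>j<dim_col A. A $$ (i,j) \<ge> 0)"

(* A square matrix of order n is reducible iff (for n = 1: it is zero; for n \<ge> 2:)
   there is a permutation P with P^T A P block upper triangular, which is the same as a
   nonempty proper index set S with a_ij = 0 for i in S, j not in S.
   We only use it for n \<ge> 2. *)
definition irreducible_mat :: "real mat \<Rightarrow> bool" where
  "irreducible_mat A \<longleftrightarrow>
     \<not> (\<exists>S. S \<noteq> {} \<and> S \<subset> {..<dim_row A} \<and>
            (\<forall>i\<in>S. \<forall>j\<in>{..<dim_row A} - S. A $$ (i,j) = 0))"

definition row_sum :: "real mat \<Rightarrow> nat \<Rightarrow> real" where
  "row_sum A i = (\<Sum>j<dim_col A. A $$ (i,j))"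

definition rho :: "real mat \<Rightarrow> real" where
  "rho A = spectral_radius (map_mat complex_of_real A)"

end

theory Submission
  imports Defs
begin

text \<open>Fix \<open>i\<close>, write \<open>r\<^sub>k\<close> for the row sums and let \<open>\<rho>\<close> be the right-hand side, the positive root
  of \<open>(\<rho> - r\<^sub>i)(\<rho> + N) = N \<Sum>\<^sub>k\<^sub><\<^sub>i (r\<^sub>k - r\<^sub>i)\<close>. Take the positive test vector
  \<open>x\<^sub>l = 1 + (r\<^sub>l - r\<^sub>i)/(\<rho> + N)\<close> for \<open>l < i\<close> and \<open>x\<^sub>l = 1\<close> otherwise. Because the diagonal
  vanishes, row \<open>k\<close> of \<open>A x - \<rho> x\<close> equals a row-sum excess, which is \<open>\<le> 0\<close> as the rows are
  sorted, minus the nonnegative defect \<open>\<Sum>\<^sub>l\<^sub>\<noteq>\<^sub>k (N - a\<^sub>k\<^sub>l)(x\<^sub>l - 1)\<close>. So \<open>A x \<le> \<rho> x\<close>, and comparing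
  \<open>x\<close> with the moduli of an eigenvector for \<open>\<rho>(A)\<close> gives \<open>\<rho>(A) \<le> \<rho>\<close>. For irreducible \<open>A\<close>
  the comparison is tight only if \<open>A x = \<rho> x\<close>, i.e. excess and defect vanish in every row, and
  this unwinds to the stated conditions; conversely they make \<open>x\<close> an eigenvector for \<open>\<rho>\<close>.\<close>

section \<open>Spectral radius of nonnegative matrices\<close>

lemma rho_superinvariant_vector:
  assumes A: "A \<in> carrier_mat n n" and n: "0 < n"
    and nonneg: "\<forall>k<n. \<forall>l<n. 0 \<le> A $$ (k,l)"
  obtains u :: "nat \<Rightarrow> real"
  where "\<forall>k<n. 0 \<le> u k" "\<exists>k<n. u k \<noteq> 0"
    "\<forall>k<n. rho A * u k \<le> (\<Sum>l<n. A $$ (k,l) * u l)"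
proof -
  let ?B = "map_mat complex_of_real A"
  have B: "?B \<in> carrier_mat n n" using A by simp
  obtain lam where lam: "lam \<in> spectrum ?B" "rho A = cmod lam"
    using spectral_radius_mem_max(1)[OF B n] unfolding rho_def by auto
  then obtain w where "eigenvector ?B w lam"
    unfolding spectrum_def eigenvalue_def by auto
  hence w: "w \<in> carrier_vec n" "w \<noteq> 0\<^sub>v n" "?B *\<^sub>v w = lam \<cdot>\<^sub>v w"
    using A unfolding eigenvector_def by auto
  show thesis
  proof
    show "\<forall>k<n. 0 \<le> cmod (w $ k)" by simp
    show "\<exists>k<n. cmod (w $ k) \<noteq> 0"
    proof (rule ccontr)
      assume "\<not> ?thesis"
      hence "w = 0\<^sub>v n" using w(1) by (intro eq_vecI) auto
      thus False using w(2) by simp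
    qed
    show "\<forall>k<n. rho A * cmod (w $ k) \<le> (\<Sum>l<n. A $$ (k,l) * cmod (w $ l))"
    proof (intro allI impI)
      fix k assume k: "k < n"
      have "rho A * cmod (w $ k) = cmod ((?B *\<^sub>v w) $ k)"
        using w(1,3) k lam(2) by (simp add: norm_mult)
      also have "\<dots> = cmod (\<Sum>l<n. complex_of_real (A $$ (k,l)) * w $ l)"
        using A k w(1) by (simp add: scalar_prod_def lessThan_atLeast0)
      also have "\<dots> \<le> (\<Sum>l<n. cmod (complex_of_real (A $$ (k,l)) * w $ l))"
        by (rule norm_sum)
      also have "\<dots> = (\<Sum>l<n. A $$ (k,l) * cmod (w $ l))"
        using nonneg k by (intro sum.cong) (auto simp: norm_mult)
      finally show "rho A * cmod (w $ k) \<le> (\<Sum>l<n. A $$ (k,l) * cmod (w $ l))" .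
    qed
  qed
qed

lemma real_eigenvalue_le_rho:
  assumes A: "A \<in> carrier_mat n n" and n: "0 < n"
    and nonzero: "\<exists>k<n. x k \<noteq> 0"
    and eigen: "\<forall>k<n. (\<Sum>l<n. A $$ (k,l) * x l) = c * x k"
  shows "c \<le> rho A"
proof -
  let ?B = "map_mat complex_of_real A"
  let ?w = "vec n (\<lambda>k. complex_of_real (x k))"
  have "?B *\<^sub>v ?w = complex_of_real c \<cdot>\<^sub>v ?w"
  proof (rule eq_vecI)
    fix k assume "k < dim_vec (complex_of_real c \<cdot>\<^sub>v ?w)"
    hence k: "k < n" by simp
    have "(?B *\<^sub>v ?w) $ k = complex_of_real (\<Sum>l<n. A $$ (k,l) * x l)"
      using A k by (simp add: scalar_prod_def lessThan_atLeast0)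
    thus "(?B *\<^sub>v ?w) $ k = (complex_of_real c \<cdot>\<^sub>v ?w) $ k"
      using eigen k by simp
  qed (use A in simp)
  moreover have "?w \<noteq> 0\<^sub>v n"
    using nonzero by (metis index_vec index_zero_vec(1) of_real_eq_0_iff)
  ultimately have "eigenvector ?B ?w (complex_of_real c)"
    using A unfolding eigenvector_def by auto
  hence "complex_of_real c \<in> spectrum ?B"
    unfolding spectrum_def eigenvalue_def by auto
  hence "cmod (complex_of_real c) \<in> cmod ` spectrum ?B" by (rule imageI)
  hence "cmod (complex_of_real c) \<le> rho A"
    unfolding rho_def using A n by (intro spectral_radius_mem_max(2)[of _ n]) auto
  thus ?thesis by simp
qed

lemma max_ratio_attained:
  fixes u x :: "nat \<Rightarrow> real"
  assumes x_pos: "\<forall>k<n. 0 < x k" and u_nonneg: "\<forall>k<n. 0 \<le> u k"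
    and u_nonzero: "\<exists>k<n. u k \<noteq> 0"
  obtains m k0 where "0 < m" "k0 < n" "u k0 = m * x k0" "\<forall>l<n. u l \<le> m * x l"
proof -
  define m where "m = Max ((\<lambda>k. u k / x k) ` {..<n})"
  have n: "0 < n" using u_nonzero by auto
  have le: "u l \<le> m * x l" if "l < n" for l
  proof -
    have "u l / x l \<le> m" unfolding m_def using that by (intro Max_ge) auto
    thus ?thesis using x_pos that by (simp add: pos_divide_le_eq)
  qed
  have "m \<in> (\<lambda>k. u k / x k) ` {..<n}"
    unfolding m_def using n by (intro Max_in) auto
  then obtain k0 where k0: "k0 < n" "u k0 = m * x k0"
    using x_pos by (auto simp: field_simps)
  obtain k where k: "k < n" "u k \<noteq> 0" using u_nonzero by auto
  have "0 < m * x k" using le[OF k(1)] u_nonneg k by force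
  hence "0 < m" using x_pos k(1) by (meson zero_less_mult_pos2)
  thus thesis using that k0 le by blast
qed

text \<open>Comparison of a nonnegative super-invariant vector \<open>u\<close> (\<open>s u \<le> A u\<close>) with a
  positive sub-invariant vector \<open>x\<close> (\<open>A x \<le> c x\<close>): along the rows where \<open>u/x\<close> is
  maximal the chain \<open>s u \<le> A u \<le> m A x \<le> m c x\<close> is tight.\<close>

lemma super_sub_invariant_le:
  fixes u x :: "nat \<Rightarrow> real"
  assumes nonneg: "\<forall>k<n. \<forall>l<n. 0 \<le> A $$ (k,l)"
    and x_pos: "\<forall>k<n. 0 < x k" and u_nonneg: "\<forall>k<n. 0 \<le> u k"
    and u_nonzero: "\<exists>k<n. u k \<noteq> 0"
    and super: "\<forall>k<n. s * u k \<le> (\<Sum>l<n. A $$ (k,l) * u l)"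
    and sub: "\<forall>k<n. (\<Sum>l<n. A $$ (k,l) * x l) \<le> c * x k"
  shows "s \<le> c"
proof -
  obtain m k where m: "0 < m" "k < n" "u k = m * x k" "\<forall>l<n. u l \<le> m * x l"
    using max_ratio_attained[OF x_pos u_nonneg u_nonzero] .
  have "s * (m * x k) \<le> (\<Sum>l<n. A $$ (k,l) * u l)" using super m(2,3) by metis
  also have "\<dots> \<le> (\<Sum>l<n. A $$ (k,l) * (m * x l))"
    using nonneg m by (intro sum_mono mult_left_mono) auto
  also have "\<dots> = m * (\<Sum>l<n. A $$ (k,l) * x l)"
    by (simp add: sum_distrib_left algebra_simps)
  also have "\<dots> \<le> c * (m * x k)" using sub m by simp
  finally show "s \<le> c" using m x_pos by (simp add: mult_le_cancel_right)
qed

lemma irreducible_closed_subset: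
  assumes "irreducible_mat A" "dim_row A = n" "M \<subseteq> {..<n}" "M \<noteq> {}"
    and "\<forall>k\<in>M. \<forall>l\<in>{..<n} - M. A $$ (k,l) = 0"
  shows "M = {..<n}"
  using assms unfolding irreducible_mat_def by blast

lemma super_sub_invariant_eq:
  fixes u x :: "nat \<Rightarrow> real"
  assumes irr: "irreducible_mat A" and dim: "dim_row A = n"
    and nonneg: "\<forall>k<n. \<forall>l<n. 0 \<le> A $$ (k,l)"
    and x_pos: "\<forall>k<n. 0 < x k" and u_nonneg: "\<forall>k<n. 0 \<le> u k"
    and u_nonzero: "\<exists>k<n. u k \<noteq> 0"
    and super: "\<forall>k<n. c * u k \<le> (\<Sum>l<n. A $$ (k,l) * u l)"
    and sub: "\<forall>k<n. (\<Sum>l<n. A $$ (k,l) * x l) \<le> c * x k"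
  shows "\<forall>k<n. (\<Sum>l<n. A $$ (k,l) * x l) = c * x k"
proof -
  obtain m k0 where m: "0 < m" "k0 < n" "u k0 = m * x k0" and le: "\<forall>l<n. u l \<le> m * x l"
    using max_ratio_attained[OF x_pos u_nonneg u_nonzero] .
  define M where "M = {k. k < n \<and> u k = m * x k}"
  have tight: "(\<Sum>l<n. A $$ (k,l) * x l) = c * x k \<and> (\<forall>l\<in>{..<n} - M. A $$ (k,l) = 0)"
    if "k \<in> M" for k
  proof
    have k: "k < n" "u k = m * x k" using that M_def by auto
    have gap_nonneg: "\<forall>l\<in>{..<n}. 0 \<le> A $$ (k,l) * (m * x l - u l)"
      using nonneg le k by auto
    have "c * (m * x k) \<le> (\<Sum>l<n. A $$ (k,l) * u l)" using super k by metis
    moreover have "(\<Sum>l<n. A $$ (k,l) * (m * x l - u l))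
        = m * (\<Sum>l<n. A $$ (k,l) * x l) - (\<Sum>l<n. A $$ (k,l) * u l)"
      by (simp add: algebra_simps sum_subtractf sum_distrib_left)
    moreover have "0 \<le> (\<Sum>l<n. A $$ (k,l) * (m * x l - u l))"
      using gap_nonneg by (intro sum_nonneg) auto
    moreover have "m * (\<Sum>l<n. A $$ (k,l) * x l) \<le> m * (c * x k)"
      using sub k m by simp
    ultimately have gap: "(\<Sum>l<n. A $$ (k,l) * (m * x l - u l)) = 0"
      and "m * (\<Sum>l<n. A $$ (k,l) * x l) = m * (c * x k)"
      using mult.left_commute[of m c "x k"] by linarith+
    thus "(\<Sum>l<n. A $$ (k,l) * x l) = c * x k" using m by simp
    show "\<forall>l\<in>{..<n} - M. A $$ (k,l) = 0"
    proof
      fix l assume l: "l \<in> {..<n} - M"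
      have "A $$ (k,l) * (m * x l - u l) = 0"
        using sum_nonneg_eq_0_iff[of "{..<n}" "\<lambda>l. A $$ (k,l) * (m * x l - u l)"] gap gap_nonneg l
        by auto
      moreover have "u l < m * x l" using l le M_def by force
      ultimately show "A $$ (k,l) = 0" by simp
    qed
  qed
  have "M = {..<n}"
    using m tight by (intro irreducible_closed_subset[OF irr dim]) (auto simp: M_def)
  thus ?thesis using tight by blast
qed

lemma rho_le_of_subinvariant:
  assumes A: "A \<in> carrier_mat n n" and n: "0 < n"
    and nonneg: "\<forall>k<n. \<forall>l<n. 0 \<le> A $$ (k,l)"
    and x_pos: "\<forall>k<n. 0 < x k"
    and sub: "\<forall>k<n. (\<Sum>l<n. A $$ (k,l) * x l) \<le> c * x k"
  shows "rho A \<le> c"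
proof -
  obtain u where "\<forall>k<n. 0 \<le> u k" "\<exists>k<n. u k \<noteq> 0"
    "\<forall>k<n. rho A * u k \<le> (\<Sum>l<n. A $$ (k,l) * u l)"
    using rho_superinvariant_vector[OF A n nonneg] .
  thus ?thesis using super_sub_invariant_le[OF nonneg x_pos] sub by blast
qed

lemma subinvariant_eigen_if_rho_eq:
  assumes A: "A \<in> carrier_mat n n" and n: "0 < n" and irr: "irreducible_mat A"
    and nonneg: "\<forall>k<n. \<forall>l<n. 0 \<le> A $$ (k,l)"
    and x_pos: "\<forall>k<n. 0 < x k"
    and sub: "\<forall>k<n. (\<Sum>l<n. A $$ (k,l) * x l) \<le> c * x k"
    and rho: "rho A = c"
  shows "\<forall>k<n. (\<Sum>l<n. A $$ (k,l) * x l) = c * x k"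
proof -
  obtain u where "\<forall>k<n. 0 \<le> u k" "\<exists>k<n. u k \<noteq> 0"
    "\<forall>k<n. rho A * u k \<le> (\<Sum>l<n. A $$ (k,l) * u l)"
    using rho_superinvariant_vector[OF A n nonneg] .
  thus ?thesis
    using super_sub_invariant_eq[OF irr _ nonneg x_pos] sub A rho by auto
qed

section \<open>The bound for matrices with sorted row sums\<close>

lemma quadratic_bound_root:
  fixes a N S :: real
  assumes "0 \<le> N" "0 < a + N" "0 \<le> S"
  defines "\<rho> \<equiv> (a - N + sqrt ((a + N)\<^sup>2 + 4 * N * S)) / 2"
  shows "a \<le> \<rho>" "0 < \<rho> + N" "(\<rho> - a) * (\<rho> + N) = N * S"
proof -
  define q where "q = sqrt ((a + N)\<^sup>2 + 4 * N * S)"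
  have q2: "q\<^sup>2 = (a + N)\<^sup>2 + 4 * N * S" unfolding q_def using assms by simp
  have "a + N \<le> q" unfolding q_def using assms by (intro real_le_rsqrt) simp
  thus "a \<le> \<rho>" "0 < \<rho> + N"
    using assms(2) unfolding \<rho>_def q_def[symmetric] by (simp_all add: field_simps)
  have "(\<rho> - a) * (\<rho> + N) = (q\<^sup>2 - (a + N)\<^sup>2) / 4"
    unfolding \<rho>_def q_def[symmetric] by (simp add: power2_eq_square field_simps)
  thus "(\<rho> - a) * (\<rho> + N) = N * S" using q2 by simp
qed

lemma row_action_decomposition:
  assumes A: "A \<in> carrier_mat n n" and k: "k < n" and diag: "A $$ (k,k) = 0"
    and total: "N * (\<Sum>l<n. d l) = \<rho> - c"
  shows "(\<Sum>l<n. A $$ (k,l) * (1 + d l))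
       = \<rho> * (1 + d k) + (row_sum A k - c - d k * (\<rho> + N))
         - (\<Sum>l\<in>{..<n} - {k}. (N - A $$ (k,l)) * d l)"
proof -
  have row: "row_sum A k = (\<Sum>l<n. A $$ (k,l))" using A unfolding row_sum_def by simp
  have "(\<Sum>l<n. A $$ (k,l) * d l) = (\<Sum>l\<in>{..<n} - {k}. A $$ (k,l) * d l)"
    using sum.remove[of "{..<n}" k "\<lambda>l. A $$ (k,l) * d l"] k diag by simp
  moreover have "(\<Sum>l<n. d l) = d k + (\<Sum>l\<in>{..<n} - {k}. d l)"
    using sum.remove[of "{..<n}" k d] k by simp
  moreover have "(\<Sum>l\<in>{..<n} - {k}. (N - A $$ (k,l)) * d l)
      = N * (\<Sum>l\<in>{..<n} - {k}. d l) - (\<Sum>l\<in>{..<n} - {k}. A $$ (k,l) * d l)"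
    by (simp add: left_diff_distrib sum_subtractf sum_distrib_left)
  ultimately show ?thesis
    using total unfolding row by (simp add: algebra_simps sum.distrib)
qed

lemma sorted_plateau_iff:
  fixes r :: "nat \<Rightarrow> 'a :: linorder"
  assumes sorted: "\<And>k l. k \<le> l \<Longrightarrow> l < n \<Longrightarrow> r l \<le> r k" and i: "i < n"
  shows "((\<forall>k. i \<le> k \<and> k < n \<longrightarrow> r k = r i) \<and> (\<forall>l<i. r l \<noteq> r i \<longrightarrow> Q l))
     \<longleftrightarrow> (\<forall>k<n. r k = r 0)
         \<or> (\<exists>t. 1 \<le> t \<and> t \<le> i \<and> (\<forall>l<t. Q l) \<and> (\<forall>k. t \<le> k \<and> k < n \<longrightarrow> r k = r t))"
    (is "?tail \<and> ?head \<longleftrightarrow> ?const \<or> ?plateau")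
proof
  assume "?tail \<and> ?head"
  hence tail: ?tail and head: ?head by blast+
  define t where "t = (LEAST l. r l = r i)"
  have rt: "r t = r i" unfolding t_def by (rule LeastI) simp
  have ti: "t \<le> i" unfolding t_def by (rule Least_le) simp
  have const_from_t: "r k = r t" if "t \<le> k" "k < n" for k
  proof (cases "k \<le> i")
    case True
    have "r k \<le> r t" "r i \<le> r k" using sorted[OF that] sorted[OF True i] by blast+
    thus ?thesis using rt by (metis antisym)
  next
    case False
    hence "r k = r i" using tail that(2) by (meson nle_le)
    thus ?thesis using rt by simp
  qed
  have "Q l" if "l < t" for l
  proof -
    have "r l \<noteq> r i" using not_less_Least[of l "\<lambda>l. r l = r i"] that unfolding t_def by blast
    thus ?thesis using head that ti by simp
  qed
  show "?const \<or> ?plateau"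
  proof (cases "t = 0")
    case True
    thus ?thesis using const_from_t by blast
  next
    case False
    hence "1 \<le> t" by simp
    show ?thesis
      using \<open>1 \<le> t\<close> ti \<open>\<And>l. l < t \<Longrightarrow> Q l\<close> const_from_t by (intro disjI2 exI[of _ t]) blast
  qed
next
  assume "?const \<or> ?plateau"
  thus "?tail \<and> ?head"
  proof
    assume const: ?const
    hence "r k = r i" if "k < n" for k using that i by metis
    thus ?thesis using i by (meson order.strict_trans)
  next
    assume ?plateau
    then obtain t where t: "t \<le> i" "\<forall>l<t. Q l" "\<forall>k. t \<le> k \<and> k < n \<longrightarrow> r k = r t"
      by blast
    have "r i = r t" using t(1,3) i by blast
    moreover have "l < t" if "l < i" "r l \<noteq> r i" for l
    proof (rule ccontr)
      assume "\<not> l < t"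
      hence "t \<le> l" "l < n" using that(1) i by simp_all
      hence "r l = r t" using t(3) by blast
      thus False using that(2) \<open>r i = r t\<close> by simp
    qed
    moreover have "r k = r t" if "i \<le> k" "k < n" for k
      using t(1,3) that by (meson le_trans)
    ultimately show ?thesis using t(2) by metis
  qed
qed

locale sorted_rows =
  fixes A :: "real mat" and n :: nat and N :: real
  assumes carrier: "A \<in> carrier_mat n n"
    and nonneg: "\<forall>k<n. \<forall>l<n. 0 \<le> A $$ (k,l)"
    and diag: "\<forall>k<n. A $$ (k,k) = 0"
    and sorted: "\<And>k l. k \<le> l \<Longrightarrow> l < n \<Longrightarrow> row_sum A l \<le> row_sum A k"
    and off_diag_le: "\<And>k l. k < n \<Longrightarrow> l < n \<Longrightarrow> k \<noteq> l \<Longrightarrow> A $$ (k,l) \<le> N"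
    and N_pos: "0 < N"
begin

definition bound :: "nat \<Rightarrow> real" where
  "bound i = (row_sum A i - N + sqrt ((row_sum A i + N)\<^sup>2
                 + 4 * N * (\<Sum>k<i. row_sum A k - row_sum A i))) / 2"

text \<open>The test vector is \<open>1 + weight i\<close>; it is a Perron vector of \<open>A\<close> exactly in the
  equality case.\<close>

definition weight :: "nat \<Rightarrow> nat \<Rightarrow> real" where
  "weight i l = (if l < i then (row_sum A l - row_sum A i) / (bound i + N) else 0)"

lemma row_sum_nonneg: "k < n \<Longrightarrow> 0 \<le> row_sum A k"
  using carrier nonneg unfolding row_sum_def by (auto intro: sum_nonneg)

lemma
  assumes "i < n"
  shows row_sum_le_bound: "row_sum A i \<le> bound i"
    and bound_plus_N_pos: "0 < bound i + N"
    and bound_quadratic: "(bound i - row_sum A i) * (bound i + N)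
                            = N * (\<Sum>k<i. row_sum A k - row_sum A i)"
proof -
  have "0 \<le> (\<Sum>k<i. row_sum A k - row_sum A i)"
    using sorted assms by (intro sum_nonneg) auto
  moreover have "0 < row_sum A i + N" using row_sum_nonneg[OF assms] N_pos by simp
  ultimately show "row_sum A i \<le> bound i" "0 < bound i + N"
    "(bound i - row_sum A i) * (bound i + N) = N * (\<Sum>k<i. row_sum A k - row_sum A i)"
    using quadratic_bound_root[of N "row_sum A i"] N_pos unfolding bound_def by simp_all
qed

lemma weight_nonneg: "i < n \<Longrightarrow> 0 \<le> weight i l"
  using sorted[of l i] bound_plus_N_pos[of i] unfolding weight_def by auto

lemma weight_eq_0_iff: "i < n \<Longrightarrow> weight i l = 0 \<longleftrightarrow> (l < i \<longrightarrow> row_sum A l = row_sum A i)"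
  using bound_plus_N_pos[of i] unfolding weight_def by auto

lemma weight_total: "i < n \<Longrightarrow> N * (\<Sum>l<n. weight i l) = bound i - row_sum A i"
proof -
  assume i: "i < n"
  have "(\<Sum>l<n. weight i l) = (\<Sum>l<i. weight i l)"
    using i by (intro sum.mono_neutral_right) (auto simp: weight_def)
  also have "\<dots> = (\<Sum>k<i. row_sum A k - row_sum A i) / (bound i + N)"
    by (simp add: weight_def sum_divide_distrib)
  also have "\<dots> = (bound i - row_sum A i) / N"
    using bound_quadratic[OF i] bound_plus_N_pos[OF i] N_pos by (simp add: field_simps)
  finally show ?thesis using N_pos by simp
qed

lemma row_excess_nonpos:
  "i < n \<Longrightarrow> k < n \<Longrightarrow> row_sum A k - row_sum A i - weight i k * (bound i + N) \<le> 0"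
  using sorted[of i k] bound_plus_N_pos[of i] by (cases "k < i") (auto simp: weight_def)

lemma row_excess_eq_0_iff:
  "i < n \<Longrightarrow> row_sum A k - row_sum A i - weight i k * (bound i + N) = 0
     \<longleftrightarrow> (i \<le> k \<longrightarrow> row_sum A k = row_sum A i)"
  using bound_plus_N_pos[of i] by (cases "k < i") (auto simp: weight_def)

lemma
  assumes "i < n" "k < n"
  shows entry_defect_nonneg: "0 \<le> (\<Sum>l\<in>{..<n} - {k}. (N - A $$ (k,l)) * weight i l)"
    and entry_defect_eq_0_iff: "(\<Sum>l\<in>{..<n} - {k}. (N - A $$ (k,l)) * weight i l) = 0
         \<longleftrightarrow> (\<forall>l<i. k \<noteq> l \<longrightarrow> row_sum A l \<noteq> row_sum A i \<longrightarrow> A $$ (k,l) = N)"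
proof -
  have terms_nonneg: "\<forall>l\<in>{..<n} - {k}. 0 \<le> (N - A $$ (k,l)) * weight i l"
    using off_diag_le[of k] weight_nonneg[OF assms(1)] assms(2) by auto
  thus "0 \<le> (\<Sum>l\<in>{..<n} - {k}. (N - A $$ (k,l)) * weight i l)"
    by (intro sum_nonneg) auto
  show "(\<Sum>l\<in>{..<n} - {k}. (N - A $$ (k,l)) * weight i l) = 0
         \<longleftrightarrow> (\<forall>l<i. k \<noteq> l \<longrightarrow> row_sum A l \<noteq> row_sum A i \<longrightarrow> A $$ (k,l) = N)"
    using sum_nonneg_eq_0_iff[of "{..<n} - {k}" "\<lambda>l. (N - A $$ (k,l)) * weight i l"]
      terms_nonneg weight_eq_0_iff[OF assms(1)] assms(1) by auto
qed

lemma test_vector_row: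
  "i < n \<Longrightarrow> k < n \<Longrightarrow> (\<Sum>l<n. A $$ (k,l) * (1 + weight i l))
     = bound i * (1 + weight i k) + (row_sum A k - row_sum A i - weight i k * (bound i + N))
       - (\<Sum>l\<in>{..<n} - {k}. (N - A $$ (k,l)) * weight i l)"
  using row_action_decomposition[OF carrier _ _ weight_total] diag by blast

lemma test_vector_subinvariant:
  "i < n \<Longrightarrow> \<forall>k<n. (\<Sum>l<n. A $$ (k,l) * (1 + weight i l)) \<le> bound i * (1 + weight i k)"
  using test_vector_row row_excess_nonpos entry_defect_nonneg by fastforce

lemma test_vector_eigen_iff:
  assumes i: "i < n"
  shows "(\<forall>k<n. (\<Sum>l<n. A $$ (k,l) * (1 + weight i l)) = bound i * (1 + weight i k))
     \<longleftrightarrow> (\<forall>k. i \<le> k \<and> k < n \<longrightarrow> row_sum A k = row_sum A i)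
         \<and> (\<forall>l<i. row_sum A l \<noteq> row_sum A i \<longrightarrow> (\<forall>k<n. k \<noteq> l \<longrightarrow> A $$ (k,l) = N))"
proof -
  have "(\<Sum>l<n. A $$ (k,l) * (1 + weight i l)) = bound i * (1 + weight i k)
      \<longleftrightarrow> (i \<le> k \<longrightarrow> row_sum A k = row_sum A i)
          \<and> (\<forall>l<i. k \<noteq> l \<longrightarrow> row_sum A l \<noteq> row_sum A i \<longrightarrow> A $$ (k,l) = N)"
    if k: "k < n" for k
  proof -
    let ?excess = "row_sum A k - row_sum A i - weight i k * (bound i + N)"
    let ?defect = "\<Sum>l\<in>{..<n} - {k}. (N - A $$ (k,l)) * weight i l"
    have "(\<Sum>l<n. A $$ (k,l) * (1 + weight i l)) = bound i * (1 + weight i k)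
      \<longleftrightarrow> ?excess = 0 \<and> ?defect = 0"
      using test_vector_row[OF i k] row_excess_nonpos[OF i k] entry_defect_nonneg[OF i k]
      by linarith
    thus ?thesis unfolding row_excess_eq_0_iff[OF i] entry_defect_eq_0_iff[OF i k] .
  qed
  thus ?thesis by blast
qed

theorem rho_le_bound:
  assumes irr: "irreducible_mat A" and i: "i < n"
  shows "rho A \<le> bound i
    \<and> (rho A = bound i \<longleftrightarrow> (\<forall>k<n. row_sum A k = row_sum A 0)
          \<or> (\<exists>t. 1 \<le> t \<and> t \<le> i
                 \<and> (\<forall>k<n. \<forall>l<t. k \<noteq> l \<longrightarrow> A $$ (k,l) = N)
                 \<and> (\<forall>k. t \<le> k \<and> k < n \<longrightarrow> row_sum A k = row_sum A t)))"
    (is "_ \<and> (_ \<longleftrightarrow> ?plateau)")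
proof
  let ?x = "\<lambda>l. 1 + weight i l"
  have n: "0 < n" using i by simp
  have x_pos: "\<forall>k<n. 0 < ?x k" using weight_nonneg[OF i] by (simp add: add_pos_nonneg)
  note sub = test_vector_subinvariant[OF i]
  show le: "rho A \<le> bound i" using rho_le_of_subinvariant[OF carrier n nonneg x_pos sub] .
  have "rho A = bound i \<longleftrightarrow> (\<forall>k<n. (\<Sum>l<n. A $$ (k,l) * ?x l) = bound i * ?x k)"
  proof
    assume "rho A = bound i"
    thus "\<forall>k<n. (\<Sum>l<n. A $$ (k,l) * ?x l) = bound i * ?x k"
      by (rule subinvariant_eigen_if_rho_eq[OF carrier n irr nonneg x_pos sub])
  next
    assume eigen: "\<forall>k<n. (\<Sum>l<n. A $$ (k,l) * ?x l) = bound i * ?x k"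
    have "\<exists>k<n. ?x k \<noteq> 0" using x_pos n by (intro exI[of _ 0]) auto
    hence "bound i \<le> rho A" using real_eigenvalue_le_rho[OF carrier n _ eigen] by blast
    thus "rho A = bound i" using le by simp
  qed
  also have "\<dots> \<longleftrightarrow> (\<forall>k<n. row_sum A k = row_sum A 0)
          \<or> (\<exists>t. 1 \<le> t \<and> t \<le> i \<and> (\<forall>l<t. \<forall>k<n. k \<noteq> l \<longrightarrow> A $$ (k,l) = N)
                 \<and> (\<forall>k. t \<le> k \<and> k < n \<longrightarrow> row_sum A k = row_sum A t))"
    unfolding test_vector_eigen_iff[OF i] by (rule sorted_plateau_iff[OF sorted i])
  also have "\<dots> \<longleftrightarrow> ?plateau" by blast
  finally show "rho A = bound i \<longleftrightarrow> ?plateau" .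
qed

end

text \<open>The hypothesis \<open>2 \<le> n\<close> only makes \<open>N\<close> a genuine maximum; the argument needs just
  that \<open>N\<close> bounds the off-diagonal entries.\<close>

theorem corollary2:
  fixes A :: "real mat" and n :: nat and N :: real
  assumes "n \<ge> 2"
    and "A \<in> carrier_mat n n"
    and "nonneg_mat A"
    and "irreducible_mat A"
    and "\<forall>k<n. A $$ (k,k) = 0"
    and "\<forall>k l. k \<le> l \<and> l < n \<longrightarrow> row_sum A l \<le> row_sum A k"
    and "N = Max {A $$ (k,l) | k l. k < n \<and> l < n \<and> k \<noteq> l}"
    and "N > 0"
  shows "\<forall>i<n.
     rho A \<le> (row_sum A i - N + sqrt ((row_sum A i + N)\<^sup>2
                 + 4 * N * (\<Sum>k<i. row_sum A k - row_sum A i))) / 2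
   \<and> (rho A = (row_sum A i - N + sqrt ((row_sum A i + N)\<^sup>2
                 + 4 * N * (\<Sum>k<i. row_sum A k - row_sum A i))) / 2
      \<longleftrightarrow> (\<forall>k<n. row_sum A k = row_sum A 0)
          \<or> (\<exists>t. 1 \<le> t \<and> t \<le> i
                 \<and> (\<forall>k<n. \<forall>l<t. k \<noteq> l \<longrightarrow> A $$ (k,l) = N)
                 \<and> (\<forall>k. t \<le> k \<and> k < n \<longrightarrow> row_sum A k = row_sum A t)))"
proof -
  have "finite {A $$ (k,l) | k l. k < n \<and> l < n \<and> k \<noteq> l}"
    by (rule finite_subset[of _ "(\<lambda>(k,l). A $$ (k,l)) ` ({..<n} \<times> {..<n})"]) auto
  hence "A $$ (k,l) \<le> N" if "k < n" "l < n" "k \<noteq> l" for k l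
    unfolding assms(7) using that by (intro Max_ge) auto
  then interpret sorted_rows A n N
    using assms(2,3,5,6,8) unfolding nonneg_mat_def by unfold_locales auto
  show ?thesis using rho_le_bound[OF assms(4)] unfolding bound_def by blast
qed

end
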